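(* Let $(r(k))_{k\ge 0}$ be arbitrary elements of a commutative ring, and define $b(n,k)$ for integers $n\ge 0$, $k\ge -1$ by $b(0,k)=[k=0]$, $b(n,-1)=0$, and for $n>0$, $k\ge0$, $b(n,k)=b(n-1,k-1)+r(k)\,b(n-1,k+1)$. Then for every integer $n\ge 0$, $$\sum_{k=0}^{n}(-1)^k\, b(2n,2k)\prod_{j=0}^{k-1} r(2j)=[n=0].$$
   Context: $[P]$ denotes the Iverson bracket. An empty product equals $1$. *)

theory Defs
  imports Main
begin

text \<open>b(n,k) for n \<ge> 0, k \<ge> 0; the paper's boundary value b(n,-1)=0 is built into
  the k = 0 equation of the recursion.\<close>
fun bseq :: "(nat \<Rightarrow> 'a::comm_ring_1) \<Rightarrow> nat \<Rightarrow> nat \<Rightarrow> 'a" where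
  "bseq r 0 k = (if k = 0 then 1 else 0)"
| "bseq r (Suc n) 0 = r 0 * bseq r n 1"
| "bseq r (Suc n) (Suc k) = bseq r n k + r (Suc k) * bseq r n (Suc (Suc k))"

end

theory Submission
  imports Defs
begin

(* For m \<ge> 0 the recursion b(m+1,2k) = b(m,2k-1) + r(2k) b(m,2k+1) turns each
   signed summand (-1)^k b(m+1,2k) \<Prod>_{j<k} r(2j) into a difference G(k) - G(k+1) of the
   "potential" G(k) = (-1)^k (\<Prod>_{j<k} r(2j)) b(m,2k-1)   (with G(0) = 0, as b(m,-1) = 0).
   Hence the partial sums telescope to -G(N+1).  For n > 0 take m = 2n-1: then b(m,2n+1) = 0,
   because b(m,j) vanishes for j > m (a path of m steps cannot climb above height m), so
   the sum is 0; for n = 0 the sum is b(0,0) = 1.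
   The file proves the vanishing lemma, the one-step telescoping identity, the telescoped
   partial sum for arbitrary m and N, and finally the theorem. *)

lemma bseq_vanishes_above:
  fixes r :: "nat \<Rightarrow> 'a::comm_ring_1"
  assumes "m < j"
  shows "bseq r m j = 0"
  using assms
proof (induction m arbitrary: j)
  case 0
  then show ?case by simp
next
  case (Suc m)
  then obtain j' where j: "j = Suc j'" and "m < j'"
    by (cases j) auto
  then show ?case using Suc.IH by (simp add: j)
qed

definition potential :: "(nat \<Rightarrow> 'a::comm_ring_1) \<Rightarrow> nat \<Rightarrow> nat \<Rightarrow> 'a" where
  "potential r m k =
     (-1) ^ k * (\<Prod>j<k. r (2 * j)) * (if k = 0 then 0 else bseq r m (2 * k - 1))"

text \<open>Each summand of row m+1 is a difference of consecutive potentials of row m;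
  this is the recursion for b read at the even index 2k.\<close>
lemma summand_eq_potential_diff:
  fixes r :: "nat \<Rightarrow> 'a::comm_ring_1"
  shows "(-1) ^ k * bseq r (Suc m) (2 * k) * (\<Prod>j<k. r (2 * j))
         = potential r m k - potential r m (Suc k)"
proof (cases k)
  case 0
  then show ?thesis by (simp add: potential_def)
next
  case (Suc k')
  have rec: "bseq r (Suc m) (2 * k) = bseq r m (2 * k - 1) + r (2 * k) * bseq r m (2 * Suc k - 1)"
    using Suc by (simp add: numeral_2_eq_2)
  have prod: "(\<Prod>j<Suc k. r (2 * j)) = (\<Prod>j<k. r (2 * j)) * r (2 * k)"
    by simp
  show ?thesis
    unfolding potential_def rec prod using Suc by (simp add: algebra_simps)
qed

lemma partial_sum_telescopes:
  fixes r :: "nat \<Rightarrow> 'a::comm_ring_1"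
  shows "(\<Sum>k = 0..N. (-1) ^ k * bseq r (Suc m) (2 * k) * (\<Prod>j<k. r (2 * j)))
         = - potential r m (Suc N)"
proof -
  have "(\<Sum>k = 0..N. (-1) ^ k * bseq r (Suc m) (2 * k) * (\<Prod>j<k. r (2 * j)))
        = (\<Sum>k<Suc N. potential r m k - potential r m (Suc k))"
    by (simp add: summand_eq_potential_diff atLeast0AtMost lessThan_Suc_atMost)
  also have "\<dots> = potential r m 0 - potential r m (Suc N)"
    by (rule sum_lessThan_telescope')
  finally show ?thesis by (simp add: potential_def)
qed

theorem lemma2:
  fixes r :: "nat \<Rightarrow> 'a::comm_ring_1" and n :: nat
  shows "(\<Sum>k = 0..n. (-1) ^ k * bseq r (2 * n) (2 * k) * (\<Prod>j<k. r (2 * j)))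
         = (if n = 0 then 1 else 0)"
proof (cases n)
  case 0
  then show ?thesis by simp
next
  case (Suc n')
  have row: "2 * n = Suc (Suc (2 * n'))" using Suc by simp
  have "bseq r (Suc (2 * n')) (2 * Suc n - 1) = 0"
    using Suc by (intro bseq_vanishes_above) simp
  then have "potential r (Suc (2 * n')) (Suc n) = 0"
    by (simp add: potential_def)
  then show ?thesis
    using partial_sum_telescopes[of r "Suc (2 * n')" n] Suc by (simp only: row) simp
qed

end
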